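(* Let $F=\breve F(\alpha_1,\dots,\alpha_t)$ be a fence, let $i\in[t]$ with $\alpha_i\ge2$, let $v$ be the valley of $S_i$ (if it exists) and $p$ the peak of $S_i$ (if it exists). Then for each $j\in[\beta_i]$, as functions on $\mathcal J(F)$, \[ \alpha_i\hat\chi_{(i,j)}-j\hat\chi_p-(\alpha_i-j)\hat\chi_v=\mathbf 1(S_i\text{ has no valley})(\alpha_i-j)-(\alpha_i-j)\!\!\sum_{s_{(i,1)}\trianglelefteq u\trianglelefteq s_{(i,j)}}\!\!\#[s_{(i,1)},u]\,T_u-j\!\!\sum_{s_{(i,j)}\vartriangleleft u\trianglelefteq s_{(i,\beta_i)}}\!\!\#[u,s_{(i,\beta_i)}]\,T_u, \] where $[a,b]$ denotes an interval of $F$ and $\mathbf 1(\cdot)$ is $1$ if the statement holds and $0$ otherwise.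
   Context: Fences: let $\alpha=(\alpha_1,\dots,\alpha_t)$ be positive integers with $t\ge2$ and $\alpha_1,\alpha_t\ge2$. Put $a_0=0$, $a_i=\alpha_1+\dots+\alpha_i$, $n=a_t-1$. The fence $\breve F(\alpha)$ is the poset (order $\trianglelefteq$) on $\{x_1,\dots,x_n\}$ whose cover relations are: for $1\le j\le n-1$ with $a_{i-1}\le j<a_i$, $x_j\lessdot x_{j+1}$ if $i$ is odd and $x_j\gtrdot x_{j+1}$ if $i$ is even. Segments: $S_1=\{x_j:1\le j\le a_1\}$, $S_i=\{x_j:a_{i-1}\le j\le a_i\}$ for $2\le i\le t-1$, $S_t=\{x_j:a_{t-1}\le j\le n\}$ (each a chain). Shared elements $x_{a_i}$, $i\in[t-1]$, are peaks (cover two elements) for $i$ odd and valleys (covered by two elements) for $i$ even; the peak (valley) of $S_i$ is the shared element of $S_i$ that is a peak (valley), if any. $\breve S_i$ is the set of non-shared elements of $S_i$, $\beta_i=\#\breve S_i=\alpha_i-1$, $s_{(i,j)}$ is the $j$-th smallest element of $\breve S_i$. For $q\in F$ and an order ideal $I\in\mathcal J(F)$: $\hat\chi_q(I)=1$ if $q\in I$, else $0$; $T_q(I)=1$ if $q\in\min(F\setminus I)$, $-1$ if $q\in\max(I)$, $0$ otherwise. Write $\hat\chi_{(i,j)}=\hat\chi_{s_{(i,j)}}$. Convention: statistics indexed by nonexistent elements are identically zero. *)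

theory Defs
  imports Main
begin

text \<open>A fence with composition alpha (a list of length t, alpha_k = alpha ! (k-1)).
  The element x_j is represented by the natural number j, for 1 <= j <= n.\<close>

definition apos :: "nat list \<Rightarrow> nat \<Rightarrow> nat" where
  "apos \<alpha> i = sum_list (take i \<alpha>)"

definition fn :: "nat list \<Rightarrow> nat" where
  "fn \<alpha> = apos \<alpha> (length \<alpha>) - 1"

definition elems :: "nat list \<Rightarrow> nat set" where
  "elems \<alpha> = {1..fn \<alpha>}"

definition alph :: "nat list \<Rightarrow> nat \<Rightarrow> nat" where
  "alph \<alpha> i = \<alpha> ! (i - 1)"

definition cov :: "nat list \<Rightarrow> nat \<Rightarrow> nat \<Rightarrow> bool" where
  "cov \<alpha> x y \<longleftrightarrow> (\<exists>i j. 1 \<le> i \<and> i \<le> length \<alpha> \<and> 1 \<le> j \<and> j \<le> fn \<alpha> - 1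
      \<and> apos \<alpha> (i - 1) \<le> j \<and> j < apos \<alpha> i
      \<and> (if odd i then x = j \<and> y = j + 1 else x = j + 1 \<and> y = j))"

definition leq :: "nat list \<Rightarrow> nat \<Rightarrow> nat \<Rightarrow> bool" where
  "leq \<alpha> x y \<longleftrightarrow> x \<in> elems \<alpha> \<and> y \<in> elems \<alpha> \<and> (cov \<alpha>)\<^sup>*\<^sup>* x y"

definition less :: "nat list \<Rightarrow> nat \<Rightarrow> nat \<Rightarrow> bool" where
  "less \<alpha> x y \<longleftrightarrow> leq \<alpha> x y \<and> x \<noteq> y"

definition ideals :: "nat list \<Rightarrow> nat set set" where
  "ideals \<alpha> = {I. I \<subseteq> elems \<alpha> \<and> (\<forall>x\<in>I. \<forall>y. leq \<alpha> y x \<longrightarrow> y \<in> I)}"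

definition chi :: "nat \<Rightarrow> nat set \<Rightarrow> int" where
  "chi q I = (if q \<in> I then 1 else 0)"

definition chio :: "nat option \<Rightarrow> nat set \<Rightarrow> int" where
  "chio q I = (case q of None \<Rightarrow> 0 | Some x \<Rightarrow> chi x I)"

definition Tstat :: "nat list \<Rightarrow> nat \<Rightarrow> nat set \<Rightarrow> int" where
  "Tstat \<alpha> q I =
     (if q \<in> elems \<alpha> - I \<and> \<not> (\<exists>y \<in> elems \<alpha> - I. less \<alpha> y q) then 1
      else if q \<in> I \<and> \<not> (\<exists>y \<in> I. less \<alpha> q y) then -1 else 0)"

definition segment :: "nat list \<Rightarrow> nat \<Rightarrow> nat set" where
  "segment \<alpha> i =
     (if i = 1 then {1..apos \<alpha> 1}
      else if i < length \<alpha> then {apos \<alpha> (i - 1)..apos \<alpha> i}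
      else {apos \<alpha> (length \<alpha> - 1)..fn \<alpha>})"

definition shared :: "nat list \<Rightarrow> nat set" where
  "shared \<alpha> = {apos \<alpha> k | k. 1 \<le> k \<and> k \<le> length \<alpha> - 1}"

definition is_peak :: "nat list \<Rightarrow> nat \<Rightarrow> bool" where
  "is_peak \<alpha> q \<longleftrightarrow> card {y \<in> elems \<alpha>. cov \<alpha> y q} = 2"

definition is_valley :: "nat list \<Rightarrow> nat \<Rightarrow> bool" where
  "is_valley \<alpha> q \<longleftrightarrow> card {y \<in> elems \<alpha>. cov \<alpha> q y} = 2"

definition peak :: "nat list \<Rightarrow> nat \<Rightarrow> nat option" where
  "peak \<alpha> i = (if \<exists>q. q \<in> segment \<alpha> i \<inter> shared \<alpha> \<and> is_peak \<alpha> q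
      then Some (THE q. q \<in> segment \<alpha> i \<inter> shared \<alpha> \<and> is_peak \<alpha> q) else None)"

definition valley :: "nat list \<Rightarrow> nat \<Rightarrow> nat option" where
  "valley \<alpha> i = (if \<exists>q. q \<in> segment \<alpha> i \<inter> shared \<alpha> \<and> is_valley \<alpha> q
      then Some (THE q. q \<in> segment \<alpha> i \<inter> shared \<alpha> \<and> is_valley \<alpha> q) else None)"

definition breveS :: "nat list \<Rightarrow> nat \<Rightarrow> nat set" where
  "breveS \<alpha> i = segment \<alpha> i - shared \<alpha>"

definition sel :: "nat list \<Rightarrow> nat \<Rightarrow> nat \<Rightarrow> nat" where
  "sel \<alpha> i j = (THE x. x \<in> breveS \<alpha> i \<and> card {y \<in> breveS \<alpha> i. less \<alpha> y x} = j - 1)"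

definition interval :: "nat list \<Rightarrow> nat \<Rightarrow> nat \<Rightarrow> nat set" where
  "interval \<alpha> a b = {u \<in> elems \<alpha>. leq \<alpha> a u \<and> leq \<alpha> u b}"

end

theory Submission
  imports Defs
begin

(* Read upwards from its valley to its peak, the segment S_i is a chain
   pos 0 < pos 1 < ... < pos alpha_i whose inner elements are the s_(i,m), and the
   intervals between them are pieces of this chain. For an order ideal I the sequence
   e_m = chi(pos m) is 0/1-valued and antitone, a missing valley counting as e_0 = 1 and a
   missing peak as e_(alpha_i) = 0. An inner element pos m is covered only by its two chain
   neighbours, so T_(pos m)(I) = e_(m-1) - 2 e_m + e_(m+1) is the second difference of e.
   The identity is then the discrete Green formula recovering e_j, 0 < j < alpha_i, from
   the boundary values e_0, e_(alpha_i) and the second differences of e. *)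

section \<open>Second differences\<close>

definition second_diff :: "(nat \<Rightarrow> 'a::ring_1) \<Rightarrow> nat \<Rightarrow> 'a" where
  "second_diff e m = e (m - 1) - 2 * e m + e (Suc m)"

lemma sum_of_nat_mult_second_diff:
  fixes e :: "nat \<Rightarrow> 'a::comm_ring_1"
  shows "(\<Sum>m = 1..j. of_nat m * second_diff e m)
       = e 0 - of_nat (Suc j) * e j + of_nat j * e (Suc j)"
  by (induction j) (auto simp: atLeastAtMostSuc_conv second_diff_def algebra_simps)

lemma sum_of_nat_diff_mult_second_diff:
  fixes e :: "nat \<Rightarrow> 'a::comm_ring_1"
  assumes "j < n"
  shows "(\<Sum>m\<in>{j<..<n}. of_nat (n - m) * second_diff e m)
       = of_nat (n - Suc j) * e j - of_nat (n - j) * e (Suc j) + e n"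
proof -
  obtain d where "n = Suc j + d" using assms less_iff_Suc_add by auto
  then show ?thesis
  proof (induction d arbitrary: j)
    case 0
    then show ?case by simp
  next
    case (Suc d)
    then have "{j<..<n} = insert (Suc j) {Suc j<..<n}" by auto
    then show ?case
      using Suc.IH[of "Suc j"] Suc.prems by (simp add: second_diff_def algebra_simps)
  qed
qed

lemma second_diff_green:
  fixes e :: "nat \<Rightarrow> 'a::comm_ring_1"
  assumes "j < n"
  shows "of_nat n * e j - of_nat j * e n - of_nat (n - j) * e 0
       = - of_nat (n - j) * (\<Sum>m = 1..j. of_nat m * second_diff e m)
         - of_nat j * (\<Sum>m\<in>{j<..<n}. of_nat (n - m) * second_diff e m)"
  unfolding sum_of_nat_mult_second_diff sum_of_nat_diff_mult_second_diff[OF assms]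
  using assms by (simp add: algebra_simps)

section \<open>Relations stepping between adjacent naturals\<close>

lemma rtranclp_chain:
  assumes "a \<le> b" "\<And>m. a \<le> m \<Longrightarrow> m < b \<Longrightarrow> r (f m) (f (Suc m))"
  shows "r\<^sup>*\<^sup>* (f a) (f b)"
  using assms
proof (induction b rule: dec_induct)
  case (step m)
  then show ?case by (meson less_Suc_eq rtranclp.rtrancl_into_rtrancl)
qed simp

locale adjacent_rel =
  fixes r :: "nat \<Rightarrow> nat \<Rightarrow> bool"
  assumes adjacent: "r x y \<Longrightarrow> y = Suc x \<or> x = Suc y"
begin

lemma rtranclp_iff_run:
  "r\<^sup>*\<^sup>* x y \<longleftrightarrow>
    (x \<le> y \<and> (\<forall>k\<in>{x..<y}. r k (Suc k))) \<or> (y \<le> x \<and> (\<forall>k\<in>{y..<x}. r (Suc k) k))"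
  (is "_ \<longleftrightarrow> ?run")
proof
  assume "r\<^sup>*\<^sup>* x y"
  then show ?run
  proof (induction rule: rtranclp_induct)
    case (step y z)
    from adjacent[OF step.hyps(2)] show ?case
    proof
      assume "z = Suc y"
      with step show ?case by (auto simp: less_Suc_eq)
    next
      assume "y = Suc z"
      then consider "x \<le> z" | "x = Suc z" | "Suc z < x" by linarith
      then show ?case using step \<open>y = Suc z\<close> by cases (auto simp: less_Suc_eq Suc_le_eq le_less)
    qed
  qed simp
next
  have down: "r\<^sup>*\<^sup>* x y" if "y \<le> x" "\<forall>k\<in>{y..<x}. r (Suc k) k" for x y
  proof -
    have "(r\<inverse>\<inverse>)\<^sup>*\<^sup>* (id y) (id x)"
      by (rule rtranclp_chain) (use that in auto)
    then show ?thesis by (simp add: rtranclp_conversep)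
  qed
  assume ?run
  then show "r\<^sup>*\<^sup>* x y"
    using rtranclp_chain[of x y r id] down by auto
qed

lemma rtranclp_between:
  assumes not_both: "\<And>k. \<not> (r k (Suc k) \<and> r (Suc k) k)"
    and "r\<^sup>*\<^sup>* x y"
  shows "r\<^sup>*\<^sup>* x u \<and> r\<^sup>*\<^sup>* u y \<longleftrightarrow> u \<in> {min x y..max x y}"
proof
  assume "r\<^sup>*\<^sup>* x u \<and> r\<^sup>*\<^sup>* u y"
  then have xu: "r\<^sup>*\<^sup>* x u" and uy: "r\<^sup>*\<^sup>* u y" by auto
  show "u \<in> {min x y..max x y}"
  proof (rule ccontr)
    assume "u \<notin> {min x y..max x y}"
    then consider "u < x" "u < y" | "x < u" "y < u" by (auto simp: min_def max_def split: if_splits)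
    then show False
    proof cases
      case 1
      have "r (Suc u) u" using xu \<open>u < x\<close> unfolding rtranclp_iff_run by fastforce
      moreover have "r u (Suc u)" using uy \<open>u < y\<close> unfolding rtranclp_iff_run by fastforce
      ultimately show False using not_both by blast
    next
      case 2
      have "r (u - 1) (Suc (u - 1))" using xu \<open>x < u\<close> unfolding rtranclp_iff_run by fastforce
      moreover have "r (Suc (u - 1)) (u - 1)" using uy \<open>y < u\<close> unfolding rtranclp_iff_run by fastforce
      ultimately show False using not_both by blast
    qed
  qed
next
  assume "u \<in> {min x y..max x y}"
  then show "r\<^sup>*\<^sup>* x u \<and> r\<^sup>*\<^sup>* u y"
    using assms(2) unfolding rtranclp_iff_run by auto
qed

end

section \<open>Covers, intervals and the statistic T in a fence\<close>

lemma apos_0 [simp]: "apos \<alpha> 0 = 0"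
  by (simp add: apos_def)

lemma apos_Suc: "k < length \<alpha> \<Longrightarrow> apos \<alpha> (Suc k) = apos \<alpha> k + \<alpha> ! k"
  by (simp add: apos_def take_Suc_conv_app_nth)

lemma apos_mono: "k \<le> l \<Longrightarrow> apos \<alpha> k \<le> apos \<alpha> l"
  by (metis apos_def le_add1 le_iff_add sum_list_append take_add)

lemma apos_segment_unique:
  assumes "1 \<le> i" "apos \<alpha> (i - 1) \<le> k" "k < apos \<alpha> i"
    and "1 \<le> i'" "apos \<alpha> (i' - 1) \<le> k" "k < apos \<alpha> i'"
  shows "i = i'"
proof (rule ccontr)
  assume "i \<noteq> i'"
  then have "i \<le> i' - 1 \<or> i' \<le> i - 1" by auto
  then show False using apos_mono assms by (meson le_trans not_le)
qed

lemma cov_adjacent: "cov \<alpha> x y \<Longrightarrow> y = Suc x \<or> x = Suc y"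
  unfolding cov_def by (auto split: if_splits)

lemma cov_in_elems: "cov \<alpha> x y \<Longrightarrow> x \<in> elems \<alpha> \<and> y \<in> elems \<alpha>"
  unfolding cov_def elems_def by (auto split: if_splits)

lemma cov_up_iff:
  "cov \<alpha> k (Suc k) \<longleftrightarrow> 1 \<le> k \<and> Suc k \<le> fn \<alpha> \<and>
     (\<exists>i. 1 \<le> i \<and> i \<le> length \<alpha> \<and> apos \<alpha> (i - 1) \<le> k \<and> k < apos \<alpha> i \<and> odd i)"
  unfolding cov_def by (auto split: if_splits)

lemma cov_down_iff:
  "cov \<alpha> (Suc k) k \<longleftrightarrow> 1 \<le> k \<and> Suc k \<le> fn \<alpha> \<and>
     (\<exists>i. 1 \<le> i \<and> i \<le> length \<alpha> \<and> apos \<alpha> (i - 1) \<le> k \<and> k < apos \<alpha> i \<and> even i)"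
  unfolding cov_def by (auto split: if_splits)

lemma cov_in_segment_iff:
  assumes "1 \<le> i" "i \<le> length \<alpha>" "apos \<alpha> (i - 1) \<le> k" "k < apos \<alpha> i" "1 \<le> k" "Suc k \<le> fn \<alpha>"
  shows "cov \<alpha> k (Suc k) \<longleftrightarrow> odd i" and "cov \<alpha> (Suc k) k \<longleftrightarrow> even i"
  using assms apos_segment_unique[of i \<alpha> k] unfolding cov_up_iff cov_down_iff by blast+

lemma cov_not_both: "\<not> (cov \<alpha> k (Suc k) \<and> cov \<alpha> (Suc k) k)"
  unfolding cov_up_iff cov_down_iff using apos_segment_unique by blast

lemma adjacent_rel_cov: "adjacent_rel (cov \<alpha>)"
  by unfold_locales (rule cov_adjacent)

lemma cov_asym: "cov \<alpha> x y \<Longrightarrow> \<not> cov \<alpha> y x"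
  using cov_adjacent[of \<alpha> x y] cov_not_both[of \<alpha> x] cov_not_both[of \<alpha> y] by auto

lemma interval_eq_atLeastAtMost:
  assumes "leq \<alpha> x y"
  shows "interval \<alpha> x y = {min x y..max x y}"
proof -
  have xy: "x \<in> elems \<alpha>" "y \<in> elems \<alpha>" "(cov \<alpha>)\<^sup>*\<^sup>* x y"
    using assms unfolding leq_def by auto
  have "interval \<alpha> x y = {u \<in> elems \<alpha>. (cov \<alpha>)\<^sup>*\<^sup>* x u \<and> (cov \<alpha>)\<^sup>*\<^sup>* u y}"
    using xy unfolding interval_def leq_def by auto
  also have "\<dots> = elems \<alpha> \<inter> {min x y..max x y}"
    using adjacent_rel.rtranclp_between[OF adjacent_rel_cov cov_not_both xy(3)] by blast
  also have "\<dots> = {min x y..max x y}"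
    using xy unfolding elems_def by auto
  finally show ?thesis .
qed

lemma Tstat_eq_covers:
  assumes u: "u \<in> elems \<alpha>" and I: "I \<in> ideals \<alpha>"
  shows "Tstat \<alpha> u I = (if u \<notin> I \<and> (\<forall>w. cov \<alpha> w u \<longrightarrow> w \<in> I) then 1
     else if u \<in> I \<and> (\<forall>z. cov \<alpha> u z \<longrightarrow> z \<notin> I) then -1 else 0)"
proof -
  have down_closed: "y \<in> I" if "x \<in> I" "leq \<alpha> y x" for x y
    using I that unfolding ideals_def by blast
  have less_cov: "less \<alpha> x y" if "cov \<alpha> x y" for x y
    using that cov_in_elems cov_adjacent unfolding less_def leq_def by fastforce
  have below: "(\<exists>y\<in>elems \<alpha> - I. less \<alpha> y u) \<longleftrightarrow> (\<exists>w. cov \<alpha> w u \<and> w \<notin> I)"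
  proof
    assume "\<exists>y\<in>elems \<alpha> - I. less \<alpha> y u"
    then obtain y where y: "y \<in> elems \<alpha>" "y \<notin> I" "(cov \<alpha>)\<^sup>*\<^sup>* y u" "y \<noteq> u"
      unfolding less_def leq_def by blast
    then obtain w where w: "(cov \<alpha>)\<^sup>*\<^sup>* y w" "cov \<alpha> w u"
      by (metis rtranclp.cases)
    then have "w \<notin> I" using y down_closed cov_in_elems unfolding leq_def by blast
    then show "\<exists>w. cov \<alpha> w u \<and> w \<notin> I" using w by blast
  next
    assume "\<exists>w. cov \<alpha> w u \<and> w \<notin> I"
    then obtain w where "cov \<alpha> w u" "w \<notin> I" by blast
    then show "\<exists>y\<in>elems \<alpha> - I. less \<alpha> y u" using less_cov cov_in_elems by blast
  qed
  have above: "(\<exists>y\<in>I. less \<alpha> u y) \<longleftrightarrow> (\<exists>z. cov \<alpha> u z \<and> z \<in> I)"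
  proof
    assume "\<exists>y\<in>I. less \<alpha> u y"
    then obtain y where y: "y \<in> I" "y \<in> elems \<alpha>" "(cov \<alpha>)\<^sup>*\<^sup>* u y" "y \<noteq> u"
      unfolding less_def leq_def by blast
    then obtain z where z: "cov \<alpha> u z" "(cov \<alpha>)\<^sup>*\<^sup>* z y"
      by (metis converse_rtranclpE)
    then have "z \<in> I" using y down_closed cov_in_elems unfolding leq_def by blast
    then show "\<exists>z. cov \<alpha> u z \<and> z \<in> I" using z by blast
  next
    assume "\<exists>z. cov \<alpha> u z \<and> z \<in> I"
    then show "\<exists>y\<in>I. less \<alpha> u y" using less_cov by blast
  qed
  show ?thesis unfolding Tstat_def using below above u by auto
qed

lemma if_Ex_Some_The_eq:
  assumes "{q. P q} = {x} \<inter> S"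
  shows "(if \<exists>q. P q then Some (THE q. P q) else None) = (if x \<in> S then Some x else None)"
proof (cases "x \<in> S")
  case True
  then have "P = (\<lambda>q. q = x)" using assms by auto
  then show ?thesis using True by simp
next
  case False
  then show ?thesis using assms by auto
qed

section \<open>Fences and their segments\<close>

locale fence =
  fixes \<alpha> :: "nat list"
  assumes length_ge_2: "length \<alpha> \<ge> 2"
    and parts_pos: "\<forall>k \<in> set \<alpha>. k > 0"
    and hd_ge_2: "hd \<alpha> \<ge> 2" and last_ge_2: "last \<alpha> \<ge> 2"
begin

lemma apos_strict_mono: "k < l \<Longrightarrow> l \<le> length \<alpha> \<Longrightarrow> apos \<alpha> k < apos \<alpha> l"
  using apos_Suc[of k \<alpha>] apos_mono[of "Suc k" l \<alpha>] parts_pos nth_mem[of k \<alpha>] by fastforce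

lemma apos_1: "apos \<alpha> 1 = hd \<alpha>"
  using length_ge_2 by (cases \<alpha>) (auto simp: apos_def)

lemma two_le_apos: "1 \<le> k \<Longrightarrow> 2 \<le> apos \<alpha> k"
  using apos_mono[of 1 k \<alpha>] apos_1 hd_ge_2 by simp

lemma apos_length: "apos \<alpha> (length \<alpha>) = fn \<alpha> + 1"
  using two_le_apos[of "length \<alpha>"] length_ge_2 by (simp add: fn_def)

lemma apos_butlast: "apos \<alpha> (length \<alpha> - 1) + 2 \<le> fn \<alpha> + 1"
proof -
  have "apos \<alpha> (length \<alpha>) = apos \<alpha> (length \<alpha> - 1) + last \<alpha>"
  proof -
    have "Suc (length \<alpha> - 1) = length \<alpha>" "\<alpha> \<noteq> []" using length_ge_2 by auto
    then show ?thesis using apos_Suc[of "length \<alpha> - 1" \<alpha>] by (simp add: last_conv_nth)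
  qed
  then show ?thesis using apos_length last_ge_2 by simp
qed

lemma is_peak_is_valley_apos:
  assumes "1 \<le> k" "k \<le> length \<alpha> - 1"
  shows "is_peak \<alpha> (apos \<alpha> k) \<longleftrightarrow> odd k" and "is_valley \<alpha> (apos \<alpha> k) \<longleftrightarrow> even k"
proof -
  define q where "q = apos \<alpha> k"
  have q: "2 \<le> q" "Suc q \<le> fn \<alpha>"
    using two_le_apos[of k] apos_mono[of k "length \<alpha> - 1" \<alpha>] apos_butlast assms
    unfolding q_def by auto
  have "k < length \<alpha>" using assms length_ge_2 by auto
  then have "apos \<alpha> (k - 1) \<le> q - 1" "q < apos \<alpha> (Suc k)"
    using apos_strict_mono[of "k - 1" k] apos_strict_mono[of k "Suc k"] assms unfolding q_def by auto
  then have left: "cov \<alpha> (q - 1) q \<longleftrightarrow> odd k" "cov \<alpha> q (q - 1) \<longleftrightarrow> even k"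
    and right: "cov \<alpha> q (Suc q) \<longleftrightarrow> even k" "cov \<alpha> (Suc q) q \<longleftrightarrow> odd k"
    using cov_in_segment_iff[of k \<alpha> "q - 1"] cov_in_segment_iff[of "Suc k" \<alpha> q] assms q
    unfolding q_def by auto
  have "cov \<alpha> y q \<longleftrightarrow> (y = q - 1 \<or> y = Suc q) \<and> odd k" for y
    using cov_adjacent[of \<alpha> y q] left right q by auto
  then have lower: "{y \<in> elems \<alpha>. cov \<alpha> y q} = (if odd k then {q - 1, Suc q} else {})"
    using cov_in_elems by auto
  have "cov \<alpha> q y \<longleftrightarrow> (y = q - 1 \<or> y = Suc q) \<and> even k" for y
    using cov_adjacent[of \<alpha> q y] left right q by auto
  then have upper: "{y \<in> elems \<alpha>. cov \<alpha> q y} = (if even k then {q - 1, Suc q} else {})"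
    using cov_in_elems by auto
  have "card {q - 1, Suc q} = 2" using q by simp
  then show "is_peak \<alpha> (apos \<alpha> k) \<longleftrightarrow> odd k" "is_valley \<alpha> (apos \<alpha> k) \<longleftrightarrow> even k"
    unfolding is_peak_def is_valley_def q_def[symmetric] lower upper by auto
qed

end

locale fence_segment = fence +
  fixes i :: nat
  assumes index_ge_1: "1 \<le> i" and index_le_length: "i \<le> length \<alpha>"
    and part_ge_2: "alph \<alpha> i \<ge> 2"
begin

abbreviation lo :: nat where "lo \<equiv> apos \<alpha> (i - 1)"
abbreviation hi :: nat where "hi \<equiv> apos \<alpha> i"
abbreviation N :: nat where "N \<equiv> alph \<alpha> i"

(* pos 0 and pos N are the valley and the peak of the segment if these exist;
   otherwise they are 0 or fn + 1, outside elems. *)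
definition pos :: "nat \<Rightarrow> nat" where
  "pos m = (if odd i then lo + m else hi - m)"

lemma hi_eq: "hi = lo + N"
  using apos_Suc[of "i - 1" \<alpha>] index_ge_1 index_le_length by (simp add: alph_def)

lemma lo_cases: "(i = 1 \<and> lo = 0) \<or> (2 \<le> i \<and> 2 \<le> lo)"
  using two_le_apos[of "i - 1"] index_ge_1 by (cases "i = 1") auto

lemma hi_cases: "(i = length \<alpha> \<and> hi = fn \<alpha> + 1) \<or> (i < length \<alpha> \<and> Suc hi \<le> fn \<alpha>)"
proof (cases "i = length \<alpha>")
  case False
  then have "hi \<le> apos \<alpha> (length \<alpha> - 1)" using apos_mono index_le_length by simp
  then show ?thesis using apos_butlast False index_le_length by simp
qed (simp add: apos_length)

lemma lo_in_elems_iff: "lo \<in> elems \<alpha> \<longleftrightarrow> 2 \<le> i"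
  using lo_cases hi_cases hi_eq part_ge_2 by (auto simp: elems_def)

lemma hi_in_elems_iff: "hi \<in> elems \<alpha> \<longleftrightarrow> i < length \<alpha>"
  using lo_cases hi_cases hi_eq part_ge_2 by (auto simp: elems_def)

lemma pos_in_elems: "1 \<le> m \<Longrightarrow> m < N \<Longrightarrow> pos m \<in> elems \<alpha>"
  using lo_cases hi_cases hi_eq unfolding pos_def by (auto simp: elems_def)

lemma inj_on_pos: "inj_on pos {0..N}"
  unfolding inj_on_def pos_def using hi_eq by auto

lemma pos_image:
  assumes "a \<le> b" "b \<le> N"
  shows "pos ` {a..b} = {min (pos a) (pos b)..max (pos a) (pos b)}"
proof (cases "odd i")
  case True
  then show ?thesis using assms unfolding pos_def by (simp add: image_add_atLeastAtMost add.commute)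
next
  case False
  have "x \<in> pos ` {a..b}" if "hi - b \<le> x" "x \<le> hi - a" for x
    using that assms hi_eq False unfolding pos_def by (intro image_eqI[of _ _ "hi - x"]) auto
  then show ?thesis using assms hi_eq False unfolding pos_def by auto
qed

lemma cov_pos_Suc:
  assumes "m < N" "pos m \<in> elems \<alpha>" "pos (Suc m) \<in> elems \<alpha>"
  shows "cov \<alpha> (pos m) (pos (Suc m))"
proof (cases "odd i")
  case True
  then show ?thesis
    using cov_in_segment_iff(1)[of i \<alpha> "lo + m"] assms index_ge_1 index_le_length hi_eq
    unfolding pos_def by (simp add: elems_def)
next
  case False
  have "pos m = Suc (hi - Suc m)" "pos (Suc m) = hi - Suc m" "lo \<le> hi - Suc m" "hi - Suc m < hi"
    using False assms(1) hi_eq unfolding pos_def by auto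
  then show ?thesis
    using cov_in_segment_iff(2)[of i \<alpha> "hi - Suc m"] False assms index_ge_1 index_le_length
    by (simp add: elems_def)
qed

lemma leq_pos:
  assumes "a \<le> b" "b \<le> N" "pos a \<in> elems \<alpha>" "pos b \<in> elems \<alpha>"
  shows "leq \<alpha> (pos a) (pos b)"
proof -
  have "pos m \<in> elems \<alpha>" if "a \<le> m" "m \<le> b" for m
    using that assms pos_in_elems[of m] by (cases "m = a \<or> m = b") auto
  then have "(cov \<alpha>)\<^sup>*\<^sup>* (pos a) (pos b)"
    using assms by (intro rtranclp_chain cov_pos_Suc) auto
  then show ?thesis using assms unfolding leq_def by blast
qed

lemma interval_pos:
  assumes "a \<le> b" "b \<le> N" "pos a \<in> elems \<alpha>" "pos b \<in> elems \<alpha>"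
  shows "interval \<alpha> (pos a) (pos b) = pos ` {a..b}"
  using interval_eq_atLeastAtMost[OF leq_pos[OF assms]] pos_image assms by simp

lemma card_interval_pos:
  assumes "a \<le> b" "b \<le> N" "pos a \<in> elems \<alpha>" "pos b \<in> elems \<alpha>"
  shows "card (interval \<alpha> (pos a) (pos b)) = Suc b - a"
  using interval_pos[OF assms] inj_on_subset[OF inj_on_pos, of "{a..b}"] assms
  by (simp add: card_image)

lemma leq_pos_iff:
  assumes "1 \<le> a" "a < N" "1 \<le> b" "b < N"
  shows "leq \<alpha> (pos a) (pos b) \<longleftrightarrow> a \<le> b"
proof -
  have "leq \<alpha> (pos a) (pos b) \<longleftrightarrow> pos a \<in> interval \<alpha> (pos 1) (pos b)"
    using leq_pos[of 1 a] pos_in_elems assms unfolding interval_def by auto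
  also have "\<dots> \<longleftrightarrow> pos a \<in> pos ` {1..b}"
    using interval_pos[of 1 b] pos_in_elems assms by simp
  also have "\<dots> \<longleftrightarrow> a \<in> {1..b}"
    using inj_on_image_mem_iff[OF inj_on_pos, of a "{1..b}"] assms by simp
  finally show ?thesis using assms by simp
qed

lemma not_shared_between: "lo < q \<Longrightarrow> q < hi \<Longrightarrow> q \<notin> shared \<alpha>"
proof
  assume q: "lo < q" "q < hi" "q \<in> shared \<alpha>"
  then obtain k where "q = apos \<alpha> k" unfolding shared_def by blast
  moreover have "k \<le> i - 1 \<or> i \<le> k" using index_ge_1 by auto
  ultimately show False
    using q(1,2) apos_mono[of k "i - 1" \<alpha>] apos_mono[of i k \<alpha>] by auto
qed

lemma lo_in_shared: "2 \<le> i \<Longrightarrow> lo \<in> shared \<alpha>"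
  unfolding shared_def using index_le_length by force

lemma hi_in_shared: "i < length \<alpha> \<Longrightarrow> hi \<in> shared \<alpha>"
  unfolding shared_def using index_ge_1 by force

lemma segment_eq: "segment \<alpha> i = {lo..hi} \<inter> elems \<alpha>"
  using lo_cases hi_cases index_le_length length_ge_2 hi_eq part_ge_2
  unfolding segment_def elems_def by auto

lemma segment_inter_shared: "segment \<alpha> i \<inter> shared \<alpha> = {lo, hi} \<inter> elems \<alpha>"
proof (intro equalityI subsetI)
  fix q assume "q \<in> segment \<alpha> i \<inter> shared \<alpha>"
  then have "lo \<le> q" "q \<le> hi" "q \<in> elems \<alpha>" "\<not> (lo < q \<and> q < hi)"
    using not_shared_between unfolding segment_eq by auto
  then show "q \<in> {lo, hi} \<inter> elems \<alpha>" by auto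
next
  fix q assume "q \<in> {lo, hi} \<inter> elems \<alpha>"
  then show "q \<in> segment \<alpha> i \<inter> shared \<alpha>"
    using lo_in_shared lo_in_elems_iff hi_in_shared hi_in_elems_iff hi_eq
    unfolding segment_eq by auto
qed

lemma breveS_eq: "breveS \<alpha> i = pos ` {1..N - 1}"
proof -
  have "breveS \<alpha> i = {lo<..<hi}"
  proof (intro equalityI subsetI)
    fix q assume "q \<in> breveS \<alpha> i"
    then have "q \<in> {lo..hi}" "q \<notin> {lo, hi} \<inter> elems \<alpha>" "q \<in> elems \<alpha>"
      using segment_inter_shared unfolding breveS_def segment_eq by blast+
    then show "q \<in> {lo<..<hi}" by auto
  next
    fix q assume "q \<in> {lo<..<hi}"
    then show "q \<in> breveS \<alpha> i"
      using not_shared_between lo_cases hi_cases unfolding breveS_def segment_eq elems_def by auto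
  qed
  also have "\<dots> = pos ` {1..N - 1}"
    using pos_image[of 1 "N - 1"] part_ge_2 hi_eq unfolding pos_def by auto
  finally show ?thesis .
qed

lemma less_pos_iff:
  assumes "1 \<le> a" "a < N" "1 \<le> b" "b < N"
  shows "less \<alpha> (pos a) (pos b) \<longleftrightarrow> a < b"
proof -
  have "pos a = pos b \<longleftrightarrow> a = b" using inj_on_pos assms by (simp add: inj_on_eq_iff)
  then show ?thesis using leq_pos_iff[OF assms] unfolding less_def by auto
qed

lemma sel_eq_pos:
  assumes "1 \<le> m" "m < N"
  shows "sel \<alpha> i m = pos m"
proof -
  have card_below: "card {y \<in> breveS \<alpha> i. less \<alpha> y (pos k)} = k - 1" if k: "1 \<le> k" "k < N" for k
  proof -
    have "{y \<in> breveS \<alpha> i. less \<alpha> y (pos k)} = pos ` {l \<in> {1..N - 1}. less \<alpha> (pos l) (pos k)}"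
      unfolding breveS_eq by blast
    moreover have "{l \<in> {1..N - 1}. less \<alpha> (pos l) (pos k)} = {1..<k}"
      using less_pos_iff k by auto
    moreover have "inj_on pos {1..<k}"
      by (rule inj_on_subset[OF inj_on_pos]) (use k in auto)
    ultimately show ?thesis by (simp add: card_image)
  qed
  show ?thesis
    unfolding sel_def
  proof (rule the_equality)
    show "pos m \<in> breveS \<alpha> i \<and> card {y \<in> breveS \<alpha> i. less \<alpha> y (pos m)} = m - 1"
      using assms card_below breveS_eq by auto
  next
    fix x assume x: "x \<in> breveS \<alpha> i \<and> card {y \<in> breveS \<alpha> i. less \<alpha> y x} = m - 1"
    then obtain k where k: "x = pos k" "1 \<le> k" "k < N" using breveS_eq by auto
    then have "k - 1 = m - 1" using x card_below by auto
    then have "k = m" using k(2) assms(1) by linarith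
    then show "x = pos m" using k(1) by simp
  qed
qed

lemma is_peak_is_valley_shared:
  assumes "q \<in> segment \<alpha> i \<inter> shared \<alpha>"
  shows "is_peak \<alpha> q \<longleftrightarrow> q = pos N" and "is_valley \<alpha> q \<longleftrightarrow> q = pos 0"
proof -
  have "lo \<noteq> hi" using hi_eq part_ge_2 by simp
  have "q \<in> {lo, hi} \<inter> elems \<alpha>" using assms unfolding segment_inter_shared .
  then consider "q = lo" "2 \<le> i" | "q = hi" "i < length \<alpha>"
    using lo_in_elems_iff hi_in_elems_iff by blast
  then have "(is_peak \<alpha> q \<longleftrightarrow> q = pos N) \<and> (is_valley \<alpha> q \<longleftrightarrow> q = pos 0)"
  proof cases
    case 1
    then have "is_peak \<alpha> lo \<longleftrightarrow> even i" "is_valley \<alpha> lo \<longleftrightarrow> odd i"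
      using is_peak_is_valley_apos[of "i - 1"] index_le_length by simp_all
    then show ?thesis using 1 \<open>lo \<noteq> hi\<close> hi_eq unfolding pos_def by simp
  next
    case 2
    then have "is_peak \<alpha> hi \<longleftrightarrow> odd i" "is_valley \<alpha> hi \<longleftrightarrow> even i"
      using is_peak_is_valley_apos[of i] index_ge_1 by simp_all
    then show ?thesis using 2 \<open>lo \<noteq> hi\<close> hi_eq unfolding pos_def by simp
  qed
  then show "is_peak \<alpha> q \<longleftrightarrow> q = pos N" "is_valley \<alpha> q \<longleftrightarrow> q = pos 0" by simp_all
qed

lemma peak_eq: "peak \<alpha> i = (if pos N \<in> elems \<alpha> then Some (pos N) else None)"
proof -
  have "pos N \<in> {lo, hi}" using hi_eq unfolding pos_def by simp
  then have "{q. q \<in> segment \<alpha> i \<inter> shared \<alpha> \<and> is_peak \<alpha> q} = {pos N} \<inter> elems \<alpha>"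
    using is_peak_is_valley_shared(1) unfolding segment_inter_shared by auto
  then show ?thesis unfolding peak_def by (rule if_Ex_Some_The_eq)
qed

lemma valley_eq: "valley \<alpha> i = (if pos 0 \<in> elems \<alpha> then Some (pos 0) else None)"
proof -
  have "pos 0 \<in> {lo, hi}" unfolding pos_def by simp
  then have "{q. q \<in> segment \<alpha> i \<inter> shared \<alpha> \<and> is_valley \<alpha> q} = {pos 0} \<inter> elems \<alpha>"
    using is_peak_is_valley_shared(2) unfolding segment_inter_shared by auto
  then show ?thesis unfolding valley_def by (rule if_Ex_Some_The_eq)
qed

lemma pos_neighbours:
  assumes "1 \<le> m" "m < N"
  shows "{pos m - 1, Suc (pos m)} = {pos (m - 1), pos (Suc m)}"
  using assms hi_eq unfolding pos_def by auto

lemma cov_to_pos_iff: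
  assumes "1 \<le> m" "m < N"
  shows "cov \<alpha> w (pos m) \<longleftrightarrow> pos (m - 1) \<in> elems \<alpha> \<and> w = pos (m - 1)"
proof
  assume cov: "cov \<alpha> w (pos m)"
  then have "w \<in> {pos m - 1, Suc (pos m)}" using cov_adjacent by fastforce
  then have "w = pos (m - 1) \<or> w = pos (Suc m)" using pos_neighbours[OF assms] by blast
  moreover have "w \<noteq> pos (Suc m)"
  proof
    assume "w = pos (Suc m)"
    then have "cov \<alpha> (pos m) w" using cov_pos_Suc[of m] cov_in_elems[OF cov] assms by auto
    then show False using cov_asym[OF cov] by simp
  qed
  ultimately show "pos (m - 1) \<in> elems \<alpha> \<and> w = pos (m - 1)" using cov_in_elems[OF cov] by auto
next
  assume "pos (m - 1) \<in> elems \<alpha> \<and> w = pos (m - 1)"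
  then show "cov \<alpha> w (pos m)" using cov_pos_Suc[of "m - 1"] pos_in_elems assms by simp
qed

lemma cov_from_pos_iff:
  assumes "1 \<le> m" "m < N"
  shows "cov \<alpha> (pos m) z \<longleftrightarrow> pos (Suc m) \<in> elems \<alpha> \<and> z = pos (Suc m)"
proof
  assume cov: "cov \<alpha> (pos m) z"
  then have "z \<in> {pos m - 1, Suc (pos m)}" using cov_adjacent by fastforce
  then have "z = pos (m - 1) \<or> z = pos (Suc m)" using pos_neighbours[OF assms] by blast
  moreover have "z \<noteq> pos (m - 1)"
  proof
    assume "z = pos (m - 1)"
    then have "cov \<alpha> z (pos m)" using cov_pos_Suc[of "m - 1"] cov_in_elems[OF cov] assms by auto
    then show False using cov_asym[OF cov] by simp
  qed
  ultimately show "pos (Suc m) \<in> elems \<alpha> \<and> z = pos (Suc m)" using cov_in_elems[OF cov] by auto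
next
  assume "pos (Suc m) \<in> elems \<alpha> \<and> z = pos (Suc m)"
  then show "cov \<alpha> (pos m) z" using cov_pos_Suc[of m] pos_in_elems assms by simp
qed

definition ideal_seq :: "nat set \<Rightarrow> nat \<Rightarrow> int" where
  "ideal_seq I m = (if pos m \<in> elems \<alpha> then chi (pos m) I else if m = 0 then 1 else 0)"

lemma ideal_seq_cases: "ideal_seq I m = 0 \<or> ideal_seq I m = 1"
  by (simp add: ideal_seq_def chi_def)

lemma ideal_seq_antimono:
  assumes I: "I \<in> ideals \<alpha>" and "m < N"
  shows "ideal_seq I (Suc m) \<le> ideal_seq I m"
proof (cases "pos (Suc m) \<in> elems \<alpha> \<and> pos (Suc m) \<in> I")
  case True
  show ?thesis
  proof (cases "pos m \<in> elems \<alpha>")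
    case True
    then have "leq \<alpha> (pos m) (pos (Suc m))"
      using leq_pos[of m "Suc m"] \<open>m < N\<close> \<open>pos (Suc m) \<in> elems \<alpha> \<and> _\<close> by simp
    then have "pos m \<in> I" using I \<open>pos (Suc m) \<in> elems \<alpha> \<and> _\<close> unfolding ideals_def by blast
    then show ?thesis using True ideal_seq_cases[of I "Suc m"] by (auto simp: ideal_seq_def chi_def)
  next
    case False
    then have "m = 0" using pos_in_elems[of m] \<open>m < N\<close> by (cases m) auto
    then show ?thesis using False ideal_seq_cases[of I "Suc m"] by (auto simp: ideal_seq_def)
  qed
next
  case False
  then show ?thesis using ideal_seq_cases[of I m] by (auto simp: ideal_seq_def chi_def)
qed

lemma Tstat_pos:
  assumes I: "I \<in> ideals \<alpha>" and m: "1 \<le> m" "m < N"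
  shows "Tstat \<alpha> (pos m) I = second_diff (ideal_seq I) m"
proof -
  have "pos (m - 1) \<in> elems \<alpha> \<or> m - 1 = 0" using pos_in_elems[of "m - 1"] m by linarith
  then have lower: "(\<forall>w. cov \<alpha> w (pos m) \<longrightarrow> w \<in> I) \<longleftrightarrow> ideal_seq I (m - 1) = 1"
    using cov_to_pos_iff[OF m] by (auto simp: ideal_seq_def chi_def)
  have upper: "(\<forall>z. cov \<alpha> (pos m) z \<longrightarrow> z \<notin> I) \<longleftrightarrow> ideal_seq I (Suc m) = 0"
    using cov_from_pos_iff[OF m] by (auto simp: ideal_seq_def chi_def)
  have middle: "pos m \<in> I \<longleftrightarrow> ideal_seq I m = 1"
    using pos_in_elems[OF m] by (simp add: ideal_seq_def chi_def)
  have "ideal_seq I m \<le> ideal_seq I (m - 1)" "ideal_seq I (Suc m) \<le> ideal_seq I m"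
    using ideal_seq_antimono[OF I, of "m - 1"] ideal_seq_antimono[OF I, of m] m by simp_all
  then show ?thesis
    unfolding Tstat_eq_covers[OF pos_in_elems[OF m] I] lower upper middle second_diff_def
    using ideal_seq_cases[of I "m - 1"] ideal_seq_cases[of I m] ideal_seq_cases[of I "Suc m"]
    by auto
qed

lemma sum_interval_from_first:
  fixes f :: "nat \<Rightarrow> 'a::semiring_1"
  assumes "1 \<le> j" "j < N"
  shows "(\<Sum>u\<in>interval \<alpha> (pos 1) (pos j). of_nat (card (interval \<alpha> (pos 1) u)) * f u)
       = (\<Sum>m = 1..j. of_nat m * f (pos m))"
proof (rule sum.reindex_cong[where l = pos])
  show "inj_on pos {1..j}" by (rule inj_on_subset[OF inj_on_pos]) (use assms in auto)
  show "interval \<alpha> (pos 1) (pos j) = pos ` {1..j}"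
    using interval_pos[of 1 j] pos_in_elems assms by simp
  fix m assume "m \<in> {1..j}"
  then have "card (interval \<alpha> (pos 1) (pos m)) = m"
    using card_interval_pos[of 1 m] pos_in_elems assms by simp
  then show "of_nat (card (interval \<alpha> (pos 1) (pos m))) * f (pos m) = of_nat m * f (pos m)"
    by simp
qed

lemma sum_interval_to_last:
  fixes f :: "nat \<Rightarrow> 'a::semiring_1"
  assumes "1 \<le> j" "j < N"
  shows "(\<Sum>u\<in>interval \<alpha> (pos j) (pos (N - 1)) - {pos j}.
            of_nat (card (interval \<alpha> u (pos (N - 1)))) * f u)
       = (\<Sum>m\<in>{j<..<N}. of_nat (N - m) * f (pos m))"
proof (rule sum.reindex_cong[where l = pos])
  show "inj_on pos {j<..<N}" by (rule inj_on_subset[OF inj_on_pos]) auto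
  have "interval \<alpha> (pos j) (pos (N - 1)) = pos ` {j..N - 1}"
    using interval_pos[of j "N - 1"] pos_in_elems assms by simp
  also have "\<dots> - {pos j} = pos ` ({j..N - 1} - {j})"
    by (subst inj_on_image_set_diff[OF inj_on_pos]) (use assms in auto)
  also have "{j..N - 1} - {j} = {j<..<N}" using assms by auto
  finally show "interval \<alpha> (pos j) (pos (N - 1)) - {pos j} = pos ` {j<..<N}" .
  fix m assume "m \<in> {j<..<N}"
  then have "1 \<le> m" "m \<le> N - 1" using assms by auto
  then have "card (interval \<alpha> (pos m) (pos (N - 1))) = N - m"
    using card_interval_pos[of m "N - 1"] pos_in_elems assms by simp
  then show "of_nat (card (interval \<alpha> (pos m) (pos (N - 1)))) * f (pos m) = of_nat (N - m) * f (pos m)"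
    by simp
qed

lemma chi_sel_expansion:
  assumes I: "I \<in> ideals \<alpha>" and j: "1 \<le> j" "j < N"
  shows "int N * chi (sel \<alpha> i j) I - int j * chio (peak \<alpha> i) I
           - (int N - int j) * chio (valley \<alpha> i) I
       = (if valley \<alpha> i = None then int N - int j else 0)
         - (int N - int j) *
             (\<Sum>u \<in> interval \<alpha> (sel \<alpha> i 1) (sel \<alpha> i j).
                int (card (interval \<alpha> (sel \<alpha> i 1) u)) * Tstat \<alpha> u I)
         - int j *
             (\<Sum>u \<in> interval \<alpha> (sel \<alpha> i j) (sel \<alpha> i (N - 1)) - {sel \<alpha> i j}.
                int (card (interval \<alpha> u (sel \<alpha> i (N - 1)))) * Tstat \<alpha> u I)"
proof -
  let ?e = "ideal_seq I"
  have sel: "sel \<alpha> i 1 = pos 1" "sel \<alpha> i j = pos j" "sel \<alpha> i (N - 1) = pos (N - 1)"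
    using sel_eq_pos j part_ge_2 by auto
  have left: "(\<Sum>u \<in> interval \<alpha> (pos 1) (pos j).
      int (card (interval \<alpha> (pos 1) u)) * Tstat \<alpha> u I) = (\<Sum>m = 1..j. int m * second_diff ?e m)"
    unfolding sum_interval_from_first[OF j] using Tstat_pos[OF I] j by (intro sum.cong) auto
  have right: "(\<Sum>u \<in> interval \<alpha> (pos j) (pos (N - 1)) - {pos j}.
      int (card (interval \<alpha> u (pos (N - 1)))) * Tstat \<alpha> u I)
      = (\<Sum>m\<in>{j<..<N}. int (N - m) * second_diff ?e m)"
    unfolding sum_interval_to_last[OF j] using Tstat_pos[OF I] j by (intro sum.cong) auto
  have green: "int N * ?e j - int j * ?e N - (int N - int j) * ?e 0
      = - (int N - int j) * (\<Sum>m = 1..j. int m * second_diff ?e m)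
        - int j * (\<Sum>m\<in>{j<..<N}. int (N - m) * second_diff ?e m)"
    using second_diff_green[OF j(2), of ?e] by (simp only: of_nat_diff[OF less_imp_le[OF j(2)]])
  have chi: "chi (pos j) I = ?e j"
    using pos_in_elems j by (simp add: ideal_seq_def)
  have peak: "chio (peak \<alpha> i) I = ?e N"
    using part_ge_2 by (simp add: peak_eq chio_def ideal_seq_def)
  have valley: "chio (valley \<alpha> i) I + (if valley \<alpha> i = None then 1 else 0) = ?e 0"
    by (simp add: valley_eq chio_def ideal_seq_def)
  show ?thesis
  proof (cases "valley \<alpha> i = None")
    case True
    then have "chio (valley \<alpha> i) I = 0" "?e 0 = 1" using valley by (simp_all add: chio_def)
    then show ?thesis
      unfolding sel left right chi peak using green True by (simp add: algebra_simps)
  next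
    case False
    have "chio (valley \<alpha> i) I = ?e 0" using valley by (simp add: False)
    then show ?thesis
      unfolding sel left right chi peak using green by (simp add: False algebra_simps)
  qed
qed

end

theorem theorem4p1:
  fixes \<alpha> :: "nat list" and i j :: nat and I :: "nat set"
  assumes "length \<alpha> \<ge> 2"
    and "\<forall>k \<in> set \<alpha>. k > 0"
    and "hd \<alpha> \<ge> 2" and "last \<alpha> \<ge> 2"
    and "1 \<le> i" and "i \<le> length \<alpha>" and "alph \<alpha> i \<ge> 2"
    and "1 \<le> j" and "j \<le> alph \<alpha> i - 1"
    and "I \<in> ideals \<alpha>"
  shows "int (alph \<alpha> i) * chi (sel \<alpha> i j) I - int j * chio (peak \<alpha> i) I
           - (int (alph \<alpha> i) - int j) * chio (valley \<alpha> i) I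
       = (if valley \<alpha> i = None then int (alph \<alpha> i) - int j else 0)
         - (int (alph \<alpha> i) - int j) *
             (\<Sum>u \<in> {u \<in> elems \<alpha>. leq \<alpha> (sel \<alpha> i 1) u \<and> leq \<alpha> u (sel \<alpha> i j)}.
                int (card (interval \<alpha> (sel \<alpha> i 1) u)) * Tstat \<alpha> u I)
         - int j *
             (\<Sum>u \<in> {u \<in> elems \<alpha>. less \<alpha> (sel \<alpha> i j) u \<and> leq \<alpha> u (sel \<alpha> i (alph \<alpha> i - 1))}.
                int (card (interval \<alpha> u (sel \<alpha> i (alph \<alpha> i - 1)))) * Tstat \<alpha> u I)"
proof -
  interpret fence_segment \<alpha> i
    using assms(1-7) by unfold_locales auto
  have j: "j < alph \<alpha> i" using assms(7,9) by linarith
  have lower: "{u \<in> elems \<alpha>. leq \<alpha> (sel \<alpha> i 1) u \<and> leq \<alpha> u (sel \<alpha> i j)}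
      = interval \<alpha> (sel \<alpha> i 1) (sel \<alpha> i j)"
    unfolding interval_def ..
  have upper: "{u \<in> elems \<alpha>. less \<alpha> (sel \<alpha> i j) u \<and> leq \<alpha> u (sel \<alpha> i (alph \<alpha> i - 1))}
      = interval \<alpha> (sel \<alpha> i j) (sel \<alpha> i (alph \<alpha> i - 1)) - {sel \<alpha> i j}"
    unfolding interval_def less_def by auto
  show ?thesis
    unfolding lower upper by (rule chi_sel_expansion[OF assms(10,8) j])
qed

end
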